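(* Let ${\bold H}$ be a function with domain $\omega$ such that each ${\bold H}(i)$ is a countable set with at least two elements, and let $(K,\Sigma,\Sigma^\bot)$ be a semi--creating triple for ${\bold H}$ which is linked, semi--gluing and has the cutting property. Then the forcing notion $\mathbb{Q}^+_\infty(K,\Sigma,\Sigma^\bot)$ is $\sigma$-$*$--linked.
   Context: A semi--creature for ${\bold H}$ is a quadruple $t=(\mathbf{dom}[t],\mathbf{sval}[t],\mathbf{nor}[t],\mathbf{dis}[t])$ with $\mathbf{dom}[t]$ a non-empty finite subset of $\omega$, $\emptyset\neq\mathbf{sval}[t]\subseteq\prod_{i\in\mathbf{dom}[t]}{\bold H}(i)$, $\mathbf{nor}[t]\in[0,\infty)\cup\{\infty\}$, $\mathbf{dis}[t]$ hereditarily countable, and $\mathbf{sval}[t]=\prod_{i\in\mathbf{dom}[t]}{\bold H}(i)$ iff $\mathbf{nor}[t]=\infty$. A semi--composition operation $\Sigma$ on a set $K$ of semi--creatures maps finite subsets of $K$ to subsets of $K$ with: (a) if $s\in\Sigma(\mathcal S_s)$ for all $s\in\mathcal S$ then $\Sigma(\mathcal S)\subseteq\Sigma(\bigcup_s\mathcal S_s)$; (b) $t\in\Sigma(\{t\})$, $\Sigma(\emptyset)=\emptyset$; (c) if $t\in\Sigma(\mathcal S)$ then $\mathbf{dom}[t]=\bigcup_{s\in\mathcal S}\mathbf{dom}[s]$, $v\restriction\mathbf{dom}[s]\in\mathbf{sval}[s]$ for $v\in\mathbf{sval}[t]$, $s\in\mathcal S$, and distinct members of $\mathcal S$ have disjoint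 domains. A semi--decomposition operation $\Sigma^\bot$ assigns to each $t\in K$ a non-empty family of finite subsets of $K$ with: (a) if $\{s_0,\dots,s_k\}\in\Sigma^\bot(t)$ and $\mathcal S_i\in\Sigma^\bot(s_i)$ then $\bigcup_i\mathcal S_i\in\Sigma^\bot(t)$; (b) $\{t\}\in\Sigma^\bot(t)$; (c) if $\mathcal S\in\Sigma^\bot(t)$ then $\mathbf{dom}[t]=\bigcup_{s\in\mathcal S}\mathbf{dom}[s]$ and each $v\in\prod_{i\in\mathbf{dom}[t]}{\bold H}(i)$ with $v\restriction\mathbf{dom}[s]\in\mathbf{sval}[s]$ for all $s\in\mathcal S$ is in $\mathbf{sval}[t]$. $(K,\Sigma,\Sigma^\bot)$ is then a semi--creating triple. Conditions of $\mathbb{Q}^+_\infty(K,\Sigma,\Sigma^\bot)$ are sequences $p=(w^p,t^p_0,t^p_1,\dots)$ with $w^p$ a finite function, $w^p(i)\in{\bold H}(i)$, $t^p_i\in K$, $\mathrm{dom}(w^p)$ and the $\mathbf{dom}[t^p_i]$ partitioning $\omega$, $\mathbf{nor}[t^p_i]\neq\infty$ for all $i$ and $\lim_i\mathbf{nor}[t^p_i]=\infty$. $p\leq q$ ($q$ stronger) iff $q$ arises from $p$ by finitely many operations: deciding the value (for a finite $A\subseteq\omega$, extend $w$ to $w^*$ with domain $\mathrm{dom}(w)\cup\bigcup_{i\in A}\mathbf{dom}[t_i]$, $w^*\restriction\mathbf{dom}[t_i]\in\mathbf{sval}[t_i]$ for $i\in A$, and keep exactly the $t_i$, $i\notin A$);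 applying $\Sigma$ (replace the sequence by $t^*_i\in\Sigma(\{t_j:j\in A_i\})$ for pairwise disjoint finite $A_i\subseteq\omega$); applying $\Sigma^\bot$ (new sequence $t^*_j$ with pairwise disjoint non-empty finite $A_i$ and $\{t^*_j:j\in A_i\}\in\Sigma^\bot(t_i)$); results of operations must be conditions. The triple is linked if for all $t_0,t_1\in K$ with $\mathbf{nor}[t_0],\mathbf{nor}[t_1]>1$ and $\mathbf{dom}[t_0]=\mathbf{dom}[t_1]$ there is $s\in\Sigma(\{t_0\})\cap\Sigma(\{t_1\})$ with $\mathbf{nor}[s]\geq\min\{\mathbf{nor}[t_0],\mathbf{nor}[t_1]\}-1$. It is semi--gluing if for all $t_0,\dots,t_n\in K$ with pairwise disjoint domains there is $s\in\Sigma(\{t_0,\dots,t_n\})$ with $\mathbf{nor}[s]\geq\min_k\mathbf{nor}[t_k]-1$. It has the cutting property if for every $t\in K$ with $\mathbf{nor}[t]>1$ and every non-empty proper subset $z$ of $\mathbf{dom}[t]$ there are $s_0,s_1\in K$ with $\mathbf{dom}[s_0]=z$, $\mathbf{dom}[s_1]=\mathbf{dom}[t]\setminus z$, $\mathbf{nor}[s_\ell]\geq\mathbf{nor}[t]-1$ ($\ell=0,1$) and $\{s_0,s_1\}\in\Sigma^\bot(t)$. A forcing notion $\mathbb{Q}$ is $\sigma$-$*$--linked if for every $n\in\omega$ there is a partition $\langle A_i:i\in\omega\rangle$ of $\mathbb{Q}$ such that any $q_0,\dots,q_n$ lying in one $A_i$ have a common upper bound in $\mathbb{Q}$. *)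

theory Defs
  imports Main "HOL-Library.FuncSet" "HOL-Library.Countable_Set" "HOL-Library.Extended_Real"
begin

text \<open>Values live in a type 'a (H i :: 'a set);
  the ``dis'' component lives in a type 'd (HC sets are coded by elements of 'd).\<close>

record ('a, 'd) screature =
  sdom :: "nat set"
  sval :: "(nat \<Rightarrow> 'a) set"
  snor :: ereal
  sdis :: 'd

definition semi_creature :: "(nat \<Rightarrow> 'a set) \<Rightarrow> ('a, 'd) screature \<Rightarrow> bool" where
  "semi_creature H t \<longleftrightarrow>
     sdom t \<noteq> {} \<and> finite (sdom t) \<and>
     sval t \<noteq> {} \<and> sval t \<subseteq> PiE (sdom t) H \<and>
     snor t \<ge> 0 \<and>
     (sval t = PiE (sdom t) H \<longleftrightarrow> snor t = \<infinity>)"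

definition semi_composition ::
  "(nat \<Rightarrow> 'a set) \<Rightarrow> ('a, 'd) screature set \<Rightarrow>
   (('a, 'd) screature set \<Rightarrow> ('a, 'd) screature set) \<Rightarrow> bool" where
  "semi_composition H K Sig \<longleftrightarrow>
     (\<forall>S. finite S \<and> S \<subseteq> K \<longrightarrow> Sig S \<subseteq> K) \<and>
     (\<forall>S F. finite S \<and> S \<subseteq> K \<and> (\<forall>s\<in>S. finite (F s) \<and> F s \<subseteq> K \<and> s \<in> Sig (F s))
        \<longrightarrow> Sig S \<subseteq> Sig (\<Union>s\<in>S. F s)) \<and>
     (\<forall>t\<in>K. t \<in> Sig {t}) \<and> Sig {} = {} \<and>
     (\<forall>S t. finite S \<and> S \<subseteq> K \<and> t \<in> Sig S \<longrightarrow>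
        sdom t = (\<Union>s\<in>S. sdom s) \<and>
        (\<forall>v\<in>sval t. \<forall>s\<in>S. restrict v (sdom s) \<in> sval s) \<and>
        (\<forall>s\<in>S. \<forall>s'\<in>S. s \<noteq> s' \<longrightarrow> sdom s \<inter> sdom s' = {}))"

definition semi_decomposition ::
  "(nat \<Rightarrow> 'a set) \<Rightarrow> ('a, 'd) screature set \<Rightarrow>
   (('a, 'd) screature \<Rightarrow> ('a, 'd) screature set set) \<Rightarrow> bool" where
  "semi_decomposition H K Sigb \<longleftrightarrow>
     (\<forall>t\<in>K. Sigb t \<noteq> {} \<and> (\<forall>S\<in>Sigb t. finite S \<and> S \<subseteq> K)) \<and>
     (\<forall>t\<in>K. \<forall>S\<in>Sigb t. \<forall>F. (\<forall>s\<in>S. F s \<in> Sigb s) \<longrightarrow> (\<Union>s\<in>S. F s) \<in> Sigb t) \<and>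
     (\<forall>t\<in>K. {t} \<in> Sigb t) \<and>
     (\<forall>t\<in>K. \<forall>S\<in>Sigb t.
        sdom t = (\<Union>s\<in>S. sdom s) \<and>
        (\<forall>v\<in>PiE (sdom t) H. (\<forall>s\<in>S. restrict v (sdom s) \<in> sval s) \<longrightarrow> v \<in> sval t))"

definition semi_creating_triple ::
  "(nat \<Rightarrow> 'a set) \<Rightarrow> ('a, 'd) screature set \<Rightarrow>
   (('a, 'd) screature set \<Rightarrow> ('a, 'd) screature set) \<Rightarrow>
   (('a, 'd) screature \<Rightarrow> ('a, 'd) screature set set) \<Rightarrow> bool" where
  "semi_creating_triple H K Sig Sigb \<longleftrightarrow>
     (\<forall>t\<in>K. semi_creature H t) \<and> semi_composition H K Sig \<and> semi_decomposition H K Sigb"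

definition linked_triple ::
  "('a, 'd) screature set \<Rightarrow> (('a, 'd) screature set \<Rightarrow> ('a, 'd) screature set) \<Rightarrow> bool" where
  "linked_triple K Sig \<longleftrightarrow>
     (\<forall>t0\<in>K. \<forall>t1\<in>K. snor t0 > 1 \<and> snor t1 > 1 \<and> sdom t0 = sdom t1 \<longrightarrow>
        (\<exists>s\<in>Sig {t0} \<inter> Sig {t1}. snor s \<ge> min (snor t0) (snor t1) - 1))"

definition semi_gluing ::
  "('a, 'd) screature set \<Rightarrow> (('a, 'd) screature set \<Rightarrow> ('a, 'd) screature set) \<Rightarrow> bool" where
  "semi_gluing K Sig \<longleftrightarrow>
     (\<forall>n::nat. \<forall>ts::nat \<Rightarrow> ('a, 'd) screature.
        (\<forall>k\<le>n. ts k \<in> K) \<and>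
        (\<forall>k\<le>n. \<forall>l\<le>n. k \<noteq> l \<longrightarrow> sdom (ts k) \<inter> sdom (ts l) = {}) \<longrightarrow>
        (\<exists>s\<in>Sig (ts ` {..n}). snor s \<ge> (MIN k\<in>{..n}. snor (ts k)) - 1))"

definition cutting_property ::
  "('a, 'd) screature set \<Rightarrow> (('a, 'd) screature \<Rightarrow> ('a, 'd) screature set set) \<Rightarrow> bool" where
  "cutting_property K Sigb \<longleftrightarrow>
     (\<forall>t\<in>K. snor t > 1 \<longrightarrow>
        (\<forall>z. z \<noteq> {} \<and> z \<subset> sdom t \<longrightarrow>
          (\<exists>s0\<in>K. \<exists>s1\<in>K. sdom s0 = z \<and> sdom s1 = sdom t - z \<and>
             snor s0 \<ge> snor t - 1 \<and> snor s1 \<ge> snor t - 1 \<and> {s0, s1} \<in> Sigb t)))"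

type_synonym ('a, 'd) qcond = "(nat \<rightharpoonup> 'a) \<times> (nat \<Rightarrow> ('a, 'd) screature)"

definition is_cond :: "(nat \<Rightarrow> 'a set) \<Rightarrow> ('a, 'd) screature set \<Rightarrow> ('a, 'd) qcond \<Rightarrow> bool" where
  "is_cond H K p \<longleftrightarrow> (case p of (w, t) \<Rightarrow>
     finite (dom w) \<and> (\<forall>i\<in>dom w. the (w i) \<in> H i) \<and>
     (\<forall>i. t i \<in> K) \<and>
     (\<forall>i. dom w \<inter> sdom (t i) = {}) \<and>
     (\<forall>i j. i \<noteq> j \<longrightarrow> sdom (t i) \<inter> sdom (t j) = {}) \<and>
     dom w \<union> (\<Union>i. sdom (t i)) = UNIV \<and>
     (\<forall>i. snor (t i) \<noteq> \<infinity>) \<and>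
     ((\<lambda>i. snor (t i)) \<longlonglongrightarrow> \<infinity>))"

text \<open>Deciding the value: the remaining creatures t_i, i not in A, are kept in their order.\<close>
definition decide_step :: "('a, 'd) qcond \<Rightarrow> ('a, 'd) qcond \<Rightarrow> bool" where
  "decide_step p q \<longleftrightarrow> (case p of (w, t) \<Rightarrow> case q of (w', t') \<Rightarrow>
     (\<exists>A. finite A \<and> w \<subseteq>\<^sub>m w' \<and>
        dom w' = dom w \<union> (\<Union>i\<in>A. sdom (t i)) \<and>
        (\<forall>i\<in>A. restrict (\<lambda>k. the (w' k)) (sdom (t i)) \<in> sval (t i)) \<and>
        (\<exists>f. strict_mono f \<and> range f = UNIV - A \<and> t' = t \<circ> f)))"

definition sigma_step ::
  "(('a, 'd) screature set \<Rightarrow> ('a, 'd) screature set) \<Rightarrow> ('a, 'd) qcond \<Rightarrow> ('a, 'd) qcond \<Rightarrow> bool" where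
  "sigma_step Sig p q \<longleftrightarrow> (case p of (w, t) \<Rightarrow> case q of (w', t') \<Rightarrow>
     w' = w \<and>
     (\<exists>A :: nat \<Rightarrow> nat set. (\<forall>i. finite (A i)) \<and>
        (\<forall>i j. i \<noteq> j \<longrightarrow> A i \<inter> A j = {}) \<and>
        (\<forall>i. t' i \<in> Sig (t ` A i))))"

definition sigmabot_step ::
  "(('a, 'd) screature \<Rightarrow> ('a, 'd) screature set set) \<Rightarrow> ('a, 'd) qcond \<Rightarrow> ('a, 'd) qcond \<Rightarrow> bool" where
  "sigmabot_step Sigb p q \<longleftrightarrow> (case p of (w, t) \<Rightarrow> case q of (w', t') \<Rightarrow>
     w' = w \<and>
     (\<exists>A :: nat \<Rightarrow> nat set. (\<forall>i. finite (A i) \<and> A i \<noteq> {}) \<and>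
        (\<forall>i j. i \<noteq> j \<longrightarrow> A i \<inter> A j = {}) \<and>
        (\<forall>i. t' ` A i \<in> Sigb (t i))))"

definition op_step ::
  "(nat \<Rightarrow> 'a set) \<Rightarrow> ('a, 'd) screature set \<Rightarrow>
   (('a, 'd) screature set \<Rightarrow> ('a, 'd) screature set) \<Rightarrow>
   (('a, 'd) screature \<Rightarrow> ('a, 'd) screature set set) \<Rightarrow>
   ('a, 'd) qcond \<Rightarrow> ('a, 'd) qcond \<Rightarrow> bool" where
  "op_step H K Sig Sigb p q \<longleftrightarrow> is_cond H K p \<and> is_cond H K q \<and>
     (decide_step p q \<or> sigma_step Sig p q \<or> sigmabot_step Sigb p q)"

text \<open>p \<le> q (q stronger): q arises from p by finitely many operations.\<close>
definition Q_le ::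
  "(nat \<Rightarrow> 'a set) \<Rightarrow> ('a, 'd) screature set \<Rightarrow>
   (('a, 'd) screature set \<Rightarrow> ('a, 'd) screature set) \<Rightarrow>
   (('a, 'd) screature \<Rightarrow> ('a, 'd) screature set set) \<Rightarrow>
   ('a, 'd) qcond \<Rightarrow> ('a, 'd) qcond \<Rightarrow> bool" where
  "Q_le H K Sig Sigb p q \<longleftrightarrow> is_cond H K p \<and> (op_step H K Sig Sigb)\<^sup>*\<^sup>* p q"

definition Q_conds :: "(nat \<Rightarrow> 'a set) \<Rightarrow> ('a, 'd) screature set \<Rightarrow> ('a, 'd) qcond set" where
  "Q_conds H K = {p. is_cond H K p}"

text \<open>sigma-*-linked forcing notion (Q, le), le p q meaning q is stronger;
  the partition <A_i : i in omega> is given by a colouring c.\<close>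
definition sigma_star_linked :: "'c set \<Rightarrow> ('c \<Rightarrow> 'c \<Rightarrow> bool) \<Rightarrow> bool" where
  "sigma_star_linked Q le \<longleftrightarrow>
     (\<forall>n::nat. \<exists>c :: 'c \<Rightarrow> nat. \<forall>q :: nat \<Rightarrow> 'c.
        (\<forall>j\<le>n. q j \<in> Q \<and> c (q j) = c (q 0)) \<longrightarrow> (\<exists>r\<in>Q. \<forall>j\<le>n. le (q j) r))"

end

theory Submission
  imports Defs
begin

text \<open>
  Deciding the values of the finitely many creatures of norm at most N = n + 5 strengthens
  a condition to one whose stem, a finite partial function, ranges over a countable set; the index
  of the stem is the colour of the condition. Given n + 1 conditions with the same stem, all of
  whose creatures have norm above N, choose cut points a_0 < a_1 < \<dots> and group boundaries b_k,
  common to all of them, such that in each condition the creatures starting in [b_k, b_(k+1)) end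
  before a_(k+1) and some of them lie on either side of a_k. In each condition glue every group,
  cut the result at a_k and glue the upper piece of group k to the lower piece of group k + 1:
  afterwards all n + 1 conditions consist of creatures with the same domains, the blocks
  [a_(k-1), a_k) minus the stem, at the cost of three units of norm. Applying linkedness n times
  in each block yields a common strengthening, at the cost of n more.
\<close>

lemma tendsto_PInfty_iff_finite_le:
  "((f :: nat \<Rightarrow> ereal) \<longlonglongrightarrow> \<infinity>) \<longleftrightarrow> (\<forall>R::real. finite {i. f i \<le> ereal R})"
  by (simp add: tendsto_PInfty cofinite_eq_sequentially[symmetric] eventually_cofinite not_less)

lemma finite_vimage_div2: "finite L \<Longrightarrow> finite ((\<lambda>m::nat. m div 2) -` L)"
proof -
  assume "finite L"
  moreover have "(\<lambda>m::nat. m div 2) -` L \<subseteq> (\<lambda>k. 2 * k) ` L \<union> (\<lambda>k. Suc (2 * k)) ` L"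
  proof
    fix m :: nat assume "m \<in> (\<lambda>m. m div 2) -` L"
    moreover have "m = 2 * (m div 2) \<or> m = Suc (2 * (m div 2))" by presburger
    ultimately show "m \<in> (\<lambda>k. 2 * k) ` L \<union> (\<lambda>k. Suc (2 * k)) ` L" by blast
  qed
  ultimately show ?thesis by (simp add: finite_subset)
qed

lemma strict_mono_bracket:
  fixes f :: "nat \<Rightarrow> nat"
  assumes "strict_mono f" and "f 0 \<le> x"
  shows "\<exists>k. f k \<le> x \<and> x < f (Suc k)"
proof -
  have ex: "\<exists>k. x < f k"
    using strict_mono_imp_increasing[OF assms(1), of "Suc x"] by (intro exI[of _ "Suc x"]) simp
  define m where "m = (LEAST k. x < f k)"
  have m: "x < f m" unfolding m_def using LeastI_ex[OF ex] .
  then obtain k where k: "m = Suc k" using assms(2) not0_implies_Suc by (cases m) auto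
  have "\<not> x < f k" using not_less_Least[of k "\<lambda>k. x < f k"] k unfolding m_def by simp
  then show ?thesis using m k by (intro exI[of _ k]) simp
qed

lemma countable_finite_maps:
  assumes "\<And>i. countable (H i)"
  shows "countable {w :: nat \<rightharpoonup> 'a. finite (dom w) \<and> (\<forall>i\<in>dom w. the (w i) \<in> H i)}"
    (is "countable ?W")
proof (rule countable_subset)
  let ?C = "(UNIV :: nat set) \<times> (\<Union>i. H i)"
  show "?W \<subseteq> map_of ` lists ?C"
  proof
    fix w assume w: "w \<in> ?W"
    define xs where "xs = map (\<lambda>k. (k, the (w k))) (sorted_list_of_set (dom w))"
    have "map_of xs = (Some \<circ> (\<lambda>k. the (w k))) |` dom w"
      unfolding xs_def map_of_map_restrict using w by simp
    also have "\<dots> = w"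
      by (rule ext) (simp add: restrict_map_def domIff split: option.split)
    finally have "map_of xs = w" .
    moreover have "xs \<in> lists ?C"
    proof -
      have "y \<in> (\<Union>i. H i)" if "w k = Some y" for k y
      proof -
        have "the (w k) \<in> H k" using w that by blast
        then show ?thesis using that by auto
      qed
      then show ?thesis using w unfolding xs_def by auto
    qed
    ultimately show "w \<in> map_of ` lists ?C" by blast
  qed
  show "countable (map_of ` lists ?C)" using assms by simp
qed

lemma PiE_extend_disjoint:
  assumes "\<And>i. H i \<noteq> {}" "x \<in> PiE A H" "y \<in> PiE B H" "A \<inter> B = {}" "A \<union> B \<subseteq> D"
  shows "\<exists>v\<in>PiE D H. restrict v A = x \<and> restrict v B = y"
proof -
  define h where "h k = (SOME a. a \<in> H k)" for k
  have h: "h k \<in> H k" for k using assms(1) by (simp add: h_def some_in_eq)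
  define v where "v = restrict (\<lambda>k. if k \<in> A then x k else if k \<in> B then y k else h k) D"
  have "v \<in> PiE D H"
    unfolding v_def using assms(2,3) h by (intro restrict_PiE_iff[THEN iffD2]) (auto simp: PiE_mem)
  moreover have "restrict v A = x"
  proof
    fix k show "restrict v A k = x k"
      using assms(5) PiE_arb[OF assms(2), of k] by (cases "k \<in> A") (auto simp: v_def)
  qed
  moreover have "restrict v B = y"
  proof
    fix k show "restrict v B k = y k"
      using assms(4,5) PiE_arb[OF assms(3), of k] by (cases "k \<in> B") (auto simp: v_def)
  qed
  ultimately show ?thesis by blast
qed

lemma ereal_diff_one_mono: "ereal a \<le> (x :: ereal) \<Longrightarrow> ereal (a - 1) \<le> x - 1"
  by (cases x) (auto simp: one_ereal_def)

lemma ereal_le_add_one: "(x :: ereal) - 1 \<le> ereal R \<Longrightarrow> x \<le> ereal (R + 1)"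
  by (cases x) (auto simp: one_ereal_def)

lemma finite_sublevel_of_groups:
  fixes f :: "'i \<Rightarrow> ereal" and g :: "nat \<Rightarrow> ereal"
  assumes f: "\<And>R. finite {i. f i \<le> ereal R}" and G: "\<And>i. finite {k. i \<in> G k}"
    and g: "\<And>k R. (\<forall>i\<in>G k. ereal R \<le> f i) \<Longrightarrow> ereal (R - 1) \<le> g k"
  shows "finite {k. g k \<le> ereal R}"
proof (rule finite_subset)
  let ?L = "{i. f i \<le> ereal (R + 2)}"
  show "{k. g k \<le> ereal R} \<subseteq> (\<Union>i\<in>?L. {k. i \<in> G k})"
  proof (rule subsetI, rule ccontr)
    fix k assume k: "k \<in> {k. g k \<le> ereal R}" "k \<notin> (\<Union>i\<in>?L. {k. i \<in> G k})"
    then have "\<forall>i\<in>G k. ereal (R + 2) \<le> f i" by (auto simp: not_le intro: less_imp_le)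
    then have "ereal (R + 1) \<le> g k" using g[of k "R + 2"] by (simp add: add.commute)
    then have "ereal (R + 1) \<le> ereal R" using k(1) by (blast intro: order_trans)
    then show False by simp
  qed
  show "finite (\<Union>i\<in>?L. {k. i \<in> G k})" using f G by (intro finite_UN_I) simp_all
qed

definition interleave :: "(nat \<Rightarrow> 'b) \<Rightarrow> (nat \<Rightarrow> 'b) \<Rightarrow> nat \<Rightarrow> 'b" where
  "interleave f g m = (if even m then f (m div 2) else g (m div 2))"

lemma interleave_even [simp]: "interleave f g (2 * k) = f k"
  and interleave_odd [simp]: "interleave f g (Suc (2 * k)) = g k"
  unfolding interleave_def by simp_all

section \<open>Semi-creatures and conditions\<close>

lemma op_step_Q_le: "op_step H K Sig Sigb p q \<Longrightarrow> Q_le H K Sig Sigb p q"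
  unfolding Q_le_def op_step_def by auto

lemma Q_le_trans: "Q_le H K Sig Sigb p q \<Longrightarrow> Q_le H K Sig Sigb q r \<Longrightarrow> Q_le H K Sig Sigb p r"
  unfolding Q_le_def by auto

lemma Q_le_is_cond:
  assumes "Q_le H K Sig Sigb p q"
  shows "is_cond H K q"
proof -
  have "(op_step H K Sig Sigb)\<^sup>*\<^sup>* p q" "is_cond H K p" using assms unfolding Q_le_def by auto
  then show ?thesis by (induction rule: rtranclp_induct) (auto simp: op_step_def)
qed

definition projects_to :: "('a, 'd) screature \<Rightarrow> ('a, 'd) screature \<Rightarrow> bool" where
  "projects_to t c \<longleftrightarrow> sdom c \<subseteq> sdom t \<and> (\<forall>v\<in>sval t. restrict v (sdom c) \<in> sval c)"

locale semi_creating_setting =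
  fixes H :: "nat \<Rightarrow> 'a set"
    and K :: "('a, 'd) screature set"
    and Sig :: "('a, 'd) screature set \<Rightarrow> ('a, 'd) screature set"
    and Sigb :: "('a, 'd) screature \<Rightarrow> ('a, 'd) screature set set"
  assumes H_nonempty: "\<And>i. H i \<noteq> {}"
    and triple: "semi_creating_triple H K Sig Sigb"
begin

lemma K_semi_creature: "t \<in> K \<Longrightarrow> semi_creature H t"
  using triple unfolding semi_creating_triple_def by blast

lemma K_dom_nonempty: "t \<in> K \<Longrightarrow> sdom t \<noteq> {}"
  using K_semi_creature unfolding semi_creature_def by blast

lemma K_dom_finite: "t \<in> K \<Longrightarrow> finite (sdom t)"
  using K_semi_creature unfolding semi_creature_def by blast

lemma K_val_nonempty: "t \<in> K \<Longrightarrow> sval t \<noteq> {}"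
  using K_semi_creature unfolding semi_creature_def by blast

lemma K_val_subset_PiE: "t \<in> K \<Longrightarrow> sval t \<subseteq> PiE (sdom t) H"
  using K_semi_creature unfolding semi_creature_def by blast

lemma K_norm_eq_infinity_iff: "t \<in> K \<Longrightarrow> snor t = \<infinity> \<longleftrightarrow> sval t = PiE (sdom t) H"
  using K_semi_creature unfolding semi_creature_def by blast

lemma semi_composition: "semi_composition H K Sig"
  using triple unfolding semi_creating_triple_def by blast

lemma semi_decomposition: "semi_decomposition H K Sigb"
  using triple unfolding semi_creating_triple_def by blast

lemma Sig_subset_K: "finite S \<Longrightarrow> S \<subseteq> K \<Longrightarrow> Sig S \<subseteq> K"
  using semi_composition[unfolded semi_composition_def, THEN conjunct1] by blast

lemma Sig_dom_restrict:
  assumes "finite S" "S \<subseteq> K" "t \<in> Sig S"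
  shows "sdom t = (\<Union>s\<in>S. sdom s)" "\<And>v s. v \<in> sval t \<Longrightarrow> s \<in> S \<Longrightarrow> restrict v (sdom s) \<in> sval s"
  using semi_composition[unfolded semi_composition_def, THEN conjunct2, THEN conjunct2, THEN conjunct2,
      THEN conjunct2, rule_format, OF conjI[OF assms(1) conjI[OF assms(2,3)]]]
  by blast+

lemma Sig_singleton_self: "t \<in> K \<Longrightarrow> t \<in> Sig {t}"
  using semi_composition[unfolded semi_composition_def, THEN conjunct2, THEN conjunct2, THEN conjunct1]
  by blast

lemma Sig_singleton_trans:
  assumes "s \<in> K" "u \<in> K" "s \<in> Sig {u}"
  shows "Sig {s} \<subseteq> Sig {u}"
proof -
  note refine = semi_composition[unfolded semi_composition_def, THEN conjunct2, THEN conjunct1]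
  from refine[rule_format, of "{s}" "\<lambda>_. {u}"] show ?thesis using assms by simp
qed

lemma Sigb_dom_val:
  assumes "t \<in> K" "S \<in> Sigb t"
  shows "sdom t = (\<Union>s\<in>S. sdom s)"
    "\<And>v. v \<in> PiE (sdom t) H \<Longrightarrow> (\<And>s. s \<in> S \<Longrightarrow> restrict v (sdom s) \<in> sval s) \<Longrightarrow> v \<in> sval t"
  using semi_decomposition[unfolded semi_decomposition_def, THEN conjunct2, THEN conjunct2,
      THEN conjunct2, rule_format, OF assms]
  by blast+

lemma Sig_projects_to:
  assumes "finite S" "S \<subseteq> K" "t \<in> Sig S" "c \<in> S"
  shows "projects_to t c"
  unfolding projects_to_def using Sig_dom_restrict[OF assms(1-3)] assms(4) by auto

lemma projects_to_finite_norm: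
  assumes "t \<in> K" "c \<in> K" "projects_to t c" "snor c \<noteq> \<infinity>"
  shows "snor t \<noteq> \<infinity>"
proof
  assume "snor t = \<infinity>"
  then have full: "sval t = PiE (sdom t) H" using K_norm_eq_infinity_iff assms(1) by blast
  have "PiE (sdom c) H \<subseteq> sval c"
  proof
    fix x assume x: "x \<in> PiE (sdom c) H"
    have "sdom c \<subseteq> sdom t" using assms(3) unfolding projects_to_def by blast
    moreover have "(\<lambda>_. undefined) \<in> PiE {} H" by simp
    ultimately obtain v where "v \<in> PiE (sdom t) H" "restrict v (sdom c) = x"
      using PiE_extend_disjoint[OF H_nonempty x] by (metis Int_empty_right Un_empty_right)
    then show "x \<in> sval c" using assms(3) full unfolding projects_to_def by blast
  qed
  then have "sval c = PiE (sdom c) H" using K_val_subset_PiE assms(2) by blast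
  then show False using K_norm_eq_infinity_iff assms(2,4) by blast
qed

lemma Sigb_piece_finite_norm:
  assumes g: "g \<in> K" "{s0, s1} \<in> Sigb g" and pieces: "s0 \<in> K" "s1 \<in> K" "sdom s0 \<inter> sdom s1 = {}"
    and c: "c \<in> K" "projects_to g c" "sdom c \<subseteq> sdom s0" "snor c \<noteq> \<infinity>"
  shows "snor s0 \<noteq> \<infinity>"
proof
  assume "snor s0 = \<infinity>"
  then have full: "sval s0 = PiE (sdom s0) H" using K_norm_eq_infinity_iff pieces(1) by blast
  have dom_g: "sdom g = sdom s0 \<union> sdom s1" using Sigb_dom_val(1)[OF g] by simp
  obtain y where y: "y \<in> sval s1" using K_val_nonempty pieces(2) by blast
  have "PiE (sdom c) H \<subseteq> sval c"
  proof
    fix x assume x: "x \<in> PiE (sdom c) H"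
    have "y \<in> PiE (sdom s1) H" using y K_val_subset_PiE pieces(2) by blast
    moreover have "sdom c \<inter> sdom s1 = {}" "sdom c \<union> sdom s1 \<subseteq> sdom g"
      using pieces(3) c(3) dom_g by blast+
    ultimately obtain v where v: "v \<in> PiE (sdom g) H" "restrict v (sdom c) = x" "restrict v (sdom s1) = y"
      using PiE_extend_disjoint[OF H_nonempty x] by blast
    have "restrict v (sdom s0) \<in> sval s0"
      unfolding full restrict_PiE_iff using v(1) dom_g PiE_mem by blast
    then have "v \<in> sval g" using Sigb_dom_val(2)[OF g v(1)] v(3) y by auto
    then show "x \<in> sval c" using c(2) v(2) unfolding projects_to_def by blast
  qed
  then have "sval c = PiE (sdom c) H" using K_val_subset_PiE c(1) by blast
  then show False using K_norm_eq_infinity_iff c(1,4) by blast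
qed

lemma is_condD:
  assumes "is_cond H K (w, s)"
  shows "finite (dom w)" "\<forall>i\<in>dom w. the (w i) \<in> H i" "\<And>i. s i \<in> K"
    "\<And>i. dom w \<inter> sdom (s i) = {}" "\<And>i j. i \<noteq> j \<Longrightarrow> sdom (s i) \<inter> sdom (s j) = {}"
    "dom w \<union> (\<Union>i. sdom (s i)) = UNIV" "\<And>i. snor (s i) \<noteq> \<infinity>"
    "\<And>R. finite {i. snor (s i) \<le> ereal R}"
  using assms unfolding is_cond_def tendsto_PInfty_iff_finite_le by simp_all

lemma is_condI:
  assumes "finite (dom w)" "\<forall>i\<in>dom w. the (w i) \<in> H i" "\<And>i. s i \<in> K"
    "\<And>i. dom w \<inter> sdom (s i) = {}" "\<And>i j. i \<noteq> j \<Longrightarrow> sdom (s i) \<inter> sdom (s j) = {}"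
    "dom w \<union> (\<Union>i. sdom (s i)) = UNIV" "\<And>i. snor (s i) \<noteq> \<infinity>"
    "\<And>R. finite {i. snor (s i) \<le> ereal R}"
  shows "is_cond H K (w, s)"
  using assms unfolding is_cond_def tendsto_PInfty_iff_finite_le by simp

lemma is_cond_cover: "is_cond H K (w, s) \<Longrightarrow> x \<notin> dom w \<Longrightarrow> \<exists>i. x \<in> sdom (s i)"
  using is_condD(6)[of w s] by blast

lemma is_cond_Min_in: "is_cond H K (w, s) \<Longrightarrow> Min (sdom (s i)) \<in> sdom (s i)"
  using K_dom_finite K_dom_nonempty Min_in is_condD(3) by metis

lemma is_cond_Min_le_Max:
  assumes "is_cond H K (w, s)" "y \<in> sdom (s i)"
  shows "Min (sdom (s i)) \<le> y" "y \<le> Max (sdom (s i))"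
proof -
  have "finite (sdom (s i))" using K_dom_finite is_condD(3)[OF assms(1)] .
  then show "Min (sdom (s i)) \<le> y" "y \<le> Max (sdom (s i))" using assms(2) by simp_all
qed

lemma is_cond_finite_Min_less:
  assumes "is_cond H K (w, s)"
  shows "finite {i. Min (sdom (s i)) < x}"
proof -
  have "inj (\<lambda>i. Min (sdom (s i)))"
  proof (rule injI)
    fix i j assume "Min (sdom (s i)) = Min (sdom (s j))"
    then have "Min (sdom (s i)) \<in> sdom (s i) \<inter> sdom (s j)"
      using is_cond_Min_in[OF assms, of i] is_cond_Min_in[OF assms, of j] by simp
    then show "i = j" using is_condD(5)[OF assms] by blast
  qed
  then have "finite ((\<lambda>i. Min (sdom (s i))) -` {..<x})" by (intro finite_vimageI) simp_all
  then show ?thesis by (simp add: vimage_def)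
qed

lemma is_cond_ex_Min_ge:
  assumes "is_cond H K (w, s)"
  shows "\<exists>i. x \<le> Min (sdom (s i))"
proof (rule ccontr)
  assume "\<not> ?thesis"
  then have "{i. Min (sdom (s i)) < x} = UNIV" by (auto simp: not_le)
  then show False using is_cond_finite_Min_less[OF assms, of x] by simp
qed

end

section \<open>Deciding the creatures of small norm\<close>

definition norm_threshold :: "real \<Rightarrow> (nat \<Rightarrow> ('a, 'd) screature) \<Rightarrow> nat" where
  "norm_threshold N t = (LEAST m. \<forall>i\<ge>m. ereal N < snor (t i))"

definition decided_value :: "(nat \<Rightarrow> ('a, 'd) screature) \<Rightarrow> nat \<Rightarrow> 'a" where
  "decided_value t k = (SOME v. v \<in> sval (t (SOME i. k \<in> sdom (t i)))) k"

definition decide_below :: "(nat \<rightharpoonup> 'a) \<Rightarrow> (nat \<Rightarrow> ('a, 'd) screature) \<Rightarrow> nat \<Rightarrow> nat \<rightharpoonup> 'a" where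
  "decide_below w t m = (\<lambda>k. if k \<in> (\<Union>i<m. sdom (t i)) then Some (decided_value t k) else w k)"

definition decide_small_norms :: "real \<Rightarrow> ('a, 'd) qcond \<Rightarrow> ('a, 'd) qcond" where
  "decide_small_norms N p =
    (let m = norm_threshold N (snd p) in (decide_below (fst p) (snd p) m, \<lambda>i. snd p (i + m)))"

context semi_creating_setting
begin

lemma snor_after_norm_threshold:
  assumes "is_cond H K (w, t)"
  shows "ereal N < snor (t (i + norm_threshold N t))"
proof -
  obtain m0 where "{i. snor (t i) \<le> ereal N} \<subseteq> {..<m0}"
    using is_condD(8)[OF assms] finite_nat_iff_bounded by blast
  then have "\<forall>i\<ge>m0. ereal N < snor (t i)" by (auto simp: not_le[symmetric])
  then have "\<forall>i\<ge>norm_threshold N t. ereal N < snor (t i)"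
    unfolding norm_threshold_def by (rule LeastI)
  then show ?thesis by simp
qed

lemma restrict_decided_value:
  assumes "is_cond H K (w, t)"
  shows "restrict (decided_value t) (sdom (t i)) \<in> sval (t i)"
proof -
  define v where "v = (SOME v. v \<in> sval (t i))"
  have "sval (t i) \<noteq> {}" using K_val_nonempty is_condD(3)[OF assms] .
  then have v: "v \<in> sval (t i)" unfolding v_def by (simp add: some_in_eq)
  have owner: "(SOME i'. k \<in> sdom (t i')) = i" if "k \<in> sdom (t i)" for k
  proof (rule some_equality)
    fix i' assume "k \<in> sdom (t i')"
    then show "i' = i" using that is_condD(5)[OF assms] by blast
  qed (rule that)
  have "restrict (decided_value t) (sdom (t i)) = restrict v (sdom (t i))"
    unfolding decided_value_def v_def by (intro restrict_ext) (simp add: owner)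
  also have "\<dots> = v"
  proof (rule extensional_restrict)
    have "v \<in> PiE (sdom (t i)) H" using v K_val_subset_PiE[OF is_condD(3)[OF assms]] by blast
    then show "v \<in> extensional (sdom (t i))" by (simp add: PiE_def)
  qed
  finally show ?thesis using v by simp
qed

lemma decided_value_in_H:
  assumes "is_cond H K (w, t)" "k \<in> sdom (t i)"
  shows "decided_value t k \<in> H k"
proof -
  have "restrict (decided_value t) (sdom (t i)) \<in> PiE (sdom (t i)) H"
    using restrict_decided_value[OF assms(1)] K_val_subset_PiE is_condD(3)[OF assms(1)] by blast
  then show ?thesis using assms(2) unfolding restrict_PiE_iff Pi_iff by blast
qed

lemma dom_decide_below: "dom (decide_below w t m) = dom w \<union> (\<Union>i<m. sdom (t i))"
  unfolding decide_below_def dom_def by auto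

lemma is_cond_decide_below:
  assumes c: "is_cond H K (w, t)"
  shows "is_cond H K (decide_below w t m, \<lambda>i. t (i + m))"
proof (rule is_condI)
  show "finite (dom (decide_below w t m))"
    unfolding dom_decide_below using is_condD(1,3)[OF c] K_dom_finite by blast
  show "\<forall>k\<in>dom (decide_below w t m). the (decide_below w t m k) \<in> H k"
  proof
    fix k assume "k \<in> dom (decide_below w t m)"
    then consider i where "i < m" "k \<in> sdom (t i)" | "k \<notin> (\<Union>i<m. sdom (t i))" "k \<in> dom w"
      unfolding dom_decide_below by blast
    then show "the (decide_below w t m k) \<in> H k"
    proof cases
      case 1
      then show ?thesis using decided_value_in_H[OF c] by (auto simp: decide_below_def)
    next
      case 2
      then show ?thesis using is_condD(2)[OF c] by (simp add: decide_below_def)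
    qed
  qed
  show "t (i + m) \<in> K" for i using is_condD(3)[OF c] .
  show "snor (t (i + m)) \<noteq> \<infinity>" for i using is_condD(7)[OF c] .
  show "i \<noteq> j \<Longrightarrow> sdom (t (i + m)) \<inter> sdom (t (j + m)) = {}" for i j using is_condD(5)[OF c] by simp
  show "dom (decide_below w t m) \<inter> sdom (t (i + m)) = {}" for i
  proof -
    have "sdom (t i') \<inter> sdom (t (i + m)) = {}" if "i' < m" for i'
      using that is_condD(5)[OF c] by simp
    then show ?thesis unfolding dom_decide_below using is_condD(4)[OF c] by blast
  qed
  show "dom (decide_below w t m) \<union> (\<Union>i. sdom (t (i + m))) = UNIV"
  proof -
    have "x \<in> (\<Union>i. sdom (t (i + m)))" if "x \<notin> dom (decide_below w t m)" for x
    proof -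
      have "x \<notin> dom w" "\<forall>i<m. x \<notin> sdom (t i)" using that unfolding dom_decide_below by auto
      then obtain i where "x \<in> sdom (t i)" "\<not> i < m" using is_cond_cover[OF c] by blast
      then have "x \<in> sdom (t (i - m + m))" by simp
      then show ?thesis by blast
    qed
    then show ?thesis by blast
  qed
  have "finite ((\<lambda>i. i + m) -` {i. snor (t i) \<le> ereal R})" for R
    using is_condD(8)[OF c] by (rule finite_vimageI) (simp add: inj_on_def)
  then show "finite {i. snor (t (i + m)) \<le> ereal R}" for R
    by (simp add: vimage_def)
qed

lemma decide_step_decide_below:
  assumes c: "is_cond H K (w, t)"
  shows "decide_step (w, t) (decide_below w t m, \<lambda>i. t (i + m))"
  unfolding decide_step_def prod.case
proof (intro exI[of _ "{..<m}"] conjI)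
  show "w \<subseteq>\<^sub>m decide_below w t m"
    unfolding map_le_def decide_below_def using is_condD(4)[OF c] by auto
  show "dom (decide_below w t m) = dom w \<union> (\<Union>i\<in>{..<m}. sdom (t i))"
    by (simp add: dom_decide_below)
  have "restrict (\<lambda>k. the (decide_below w t m k)) (sdom (t i)) = restrict (decided_value t) (sdom (t i))"
    if "i < m" for i
    using that by (intro restrict_ext) (auto simp: decide_below_def)
  then show "\<forall>i\<in>{..<m}. restrict (\<lambda>k. the (decide_below w t m k)) (sdom (t i)) \<in> sval (t i)"
    using restrict_decided_value[OF c] by simp
  have "range (\<lambda>i. i + m) = UNIV - {..<m}"
  proof -
    have "x \<in> range (\<lambda>i. i + m)" if "\<not> x < m" for x
      using that by (intro image_eqI[of _ _ "x - m"]) auto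
    then show ?thesis by auto
  qed
  then show "\<exists>f. strict_mono f \<and> range f = UNIV - {..<m} \<and> (\<lambda>i. t (i + m)) = t \<circ> f"
    by (intro exI[of _ "\<lambda>i. i + m"]) (auto simp: strict_mono_def)
qed simp

lemma op_step_decide_small_norms:
  assumes "is_cond H K p"
  shows "op_step H K Sig Sigb p (decide_small_norms N p)"
proof -
  obtain w t where "p = (w, t)" by fastforce
  then show ?thesis
    using assms is_cond_decide_below decide_step_decide_below
    unfolding op_step_def decide_small_norms_def by (simp add: Let_def)
qed

lemma snor_decide_small_norms:
  assumes "is_cond H K p"
  shows "ereal N < snor (snd (decide_small_norms N p) i)"
proof -
  obtain w t where "p = (w, t)" by fastforce
  then show ?thesis
    using snor_after_norm_threshold[of w t N i] assms unfolding decide_small_norms_def by (simp add: Let_def)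
qed

lemma stem_decide_small_norms:
  assumes "is_cond H K p"
  shows "fst (decide_small_norms N p) \<in> {w. finite (dom w) \<and> (\<forall>i\<in>dom w. the (w i) \<in> H i)}"
proof -
  have "is_cond H K (fst (decide_small_norms N p), snd (decide_small_norms N p))"
    using op_step_decide_small_norms[OF assms] unfolding op_step_def by simp
  then show ?thesis using is_condD(1,2) by blast
qed

end

section \<open>Gluing, cutting and linking\<close>

lemma semi_gluing_family:
  assumes gluing: "semi_gluing K Sig" and G: "finite G" "G \<noteq> {}" "s ` G \<subseteq> K"
    and disj: "\<And>i j. i \<in> G \<Longrightarrow> j \<in> G \<Longrightarrow> i \<noteq> j \<Longrightarrow> sdom (s i) \<inter> sdom (s j) = {}"
  shows "\<exists>g\<in>Sig (s ` G). \<forall>R. (\<forall>i\<in>G. ereal R \<le> snor (s i)) \<longrightarrow> ereal (R - 1) \<le> snor g"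
proof -
  obtain f where f: "bij_betw f {0..<card G} G"
    using ex_bij_betw_nat_finite[OF G(1)] by blast
  define n where "n = card G - 1"
  have "0 < card G" using G(1,2) by (simp add: card_gt_0_iff)
  then have n: "{..n} = {0..<card G}" unfolding n_def by auto
  have f_in: "f k \<in> G" if "k \<le> n" for k
    using that bij_betw_apply[OF f] n by blast
  have "f ` {..n} = G" using f n by (simp add: bij_betw_def)
  then have img: "(s \<circ> f) ` {..n} = s ` G" by (metis image_comp)
  have "\<forall>k\<le>n. (s \<circ> f) k \<in> K" using f_in G(3) by auto
  moreover have "\<forall>k\<le>n. \<forall>l\<le>n. k \<noteq> l \<longrightarrow> sdom ((s \<circ> f) k) \<inter> sdom ((s \<circ> f) l) = {}"
  proof (intro allI impI)
    fix k l assume "k \<le> n" "l \<le> n" "k \<noteq> l"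
    moreover have "inj_on f {..n}" using bij_betw_imp_inj_on[OF f] n by simp
    ultimately have "f k \<noteq> f l" by (simp add: inj_on_eq_iff)
    then show "sdom ((s \<circ> f) k) \<inter> sdom ((s \<circ> f) l) = {}"
      using disj f_in \<open>k \<le> n\<close> \<open>l \<le> n\<close> by simp
  qed
  ultimately obtain g where g: "g \<in> Sig (s ` G)" "(MIN k\<in>{..n}. snor ((s \<circ> f) k)) - 1 \<le> snor g"
    using gluing[unfolded semi_gluing_def, rule_format, of n "s \<circ> f"] img by auto
  show ?thesis
  proof (intro bexI[OF _ g(1)] allI impI)
    fix R assume "\<forall>i\<in>G. ereal R \<le> snor (s i)"
    then have "ereal R \<le> (MIN k\<in>{..n}. snor ((s \<circ> f) k))" using f_in by simp
    then show "ereal (R - 1) \<le> snor g" using ereal_diff_one_mono g(2) order_trans by blast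
  qed
qed

context semi_creating_setting
begin

lemma is_cond_glued:
  assumes c: "is_cond H K (w, s)"
    and G: "\<And>k. G k \<noteq> {}" "\<And>k k'. k \<noteq> k' \<Longrightarrow> G k \<inter> G k' = {}" "\<And>i. \<exists>k. i \<in> G k"
    and t_K: "\<And>k. t k \<in> K" and t_dom: "\<And>k. sdom (t k) = (\<Union>i\<in>G k. sdom (s i))"
    and t_proj: "\<And>k i. i \<in> G k \<Longrightarrow> projects_to (t k) (s i)"
    and t_norm: "\<And>k R. (\<forall>i\<in>G k. ereal R \<le> snor (s i)) \<Longrightarrow> ereal (R - 1) \<le> snor (t k)"
  shows "is_cond H K (w, t)"
proof (rule is_condI)
  show "dom w \<inter> sdom (t k) = {}" for k
    unfolding t_dom using is_condD(4)[OF c] by blast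
  show "sdom (t k) \<inter> sdom (t k') = {}" if "k \<noteq> k'" for k k'
  proof -
    have "sdom (s i) \<inter> sdom (s i') = {}" if "i \<in> G k" "i' \<in> G k'" for i i'
    proof -
      have "i \<noteq> i'" using G(2)[OF \<open>k \<noteq> k'\<close>] that by blast
      then show ?thesis using is_condD(5)[OF c] by blast
    qed
    then show ?thesis unfolding t_dom by blast
  qed
  have "x \<in> (\<Union>k. sdom (t k))" if x: "x \<notin> dom w" for x
  proof -
    obtain i where "x \<in> sdom (s i)" using is_cond_cover[OF c x] by blast
    moreover obtain k where "i \<in> G k" using G(3) by blast
    ultimately show ?thesis unfolding t_dom by blast
  qed
  then show "dom w \<union> (\<Union>k. sdom (t k)) = UNIV" by blast
  show "snor (t k) \<noteq> \<infinity>" for k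
  proof -
    obtain i where "i \<in> G k" using G(1) by blast
    then show ?thesis
      using projects_to_finite_norm[OF t_K is_condD(3)[OF c] t_proj is_condD(7)[OF c]] by blast
  qed
  have owners: "finite {k. i \<in> G k}" for i
  proof -
    obtain k0 where "i \<in> G k0" using G(3) by blast
    then have "{k. i \<in> G k} \<subseteq> {k0}" using G(2) by blast
    then show ?thesis by (rule finite_subset) simp
  qed
  show "finite {k. snor (t k) \<le> ereal R}" for R
    by (rule finite_sublevel_of_groups[where G = G, OF is_condD(8)[OF c] owners t_norm])
qed (use is_condD(1,2)[OF c] t_K in simp_all)

lemma glue_step:
  assumes gluing: "semi_gluing K Sig" and c: "is_cond H K (w, s)"
    and G: "\<And>k. finite (G k)" "\<And>k. G k \<noteq> {}"
      "\<And>k k'. k \<noteq> k' \<Longrightarrow> G k \<inter> G k' = {}" "\<And>i. \<exists>k. i \<in> G k"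
  obtains t where "op_step H K Sig Sigb (w, s) (w, t)"
    "\<And>k. sdom (t k) = (\<Union>i\<in>G k. sdom (s i))"
    "\<And>k i. i \<in> G k \<Longrightarrow> projects_to (t k) (s i)"
    "\<And>k R. (\<forall>i\<in>G k. ereal R \<le> snor (s i)) \<Longrightarrow> ereal (R - 1) \<le> snor (t k)"
proof -
  have sG: "finite (s ` G k)" "s ` G k \<subseteq> K" for k
    using G(1) is_condD(3)[OF c] by auto
  have "\<forall>k. \<exists>g. g \<in> Sig (s ` G k) \<and>
      (\<forall>R. (\<forall>i\<in>G k. ereal R \<le> snor (s i)) \<longrightarrow> ereal (R - 1) \<le> snor g)"
    using semi_gluing_family[OF gluing G(1,2) sG(2)] is_condD(5)[OF c] by blast
  then obtain t where t: "\<And>k. t k \<in> Sig (s ` G k)"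
    and t_norm: "\<And>k R. (\<forall>i\<in>G k. ereal R \<le> snor (s i)) \<Longrightarrow> ereal (R - 1) \<le> snor (t k)"
    using choice[of "\<lambda>k g. g \<in> Sig (s ` G k) \<and>
      (\<forall>R. (\<forall>i\<in>G k. ereal R \<le> snor (s i)) \<longrightarrow> ereal (R - 1) \<le> snor g)"] by blast
  have t_K: "t k \<in> K" for k using Sig_subset_K[OF sG] t by blast
  have t_dom: "sdom (t k) = (\<Union>i\<in>G k. sdom (s i))" for k
    using Sig_dom_restrict(1)[OF sG t] by simp
  have t_proj: "projects_to (t k) (s i)" if "i \<in> G k" for k i
    using Sig_projects_to[OF sG t] that by blast
  have "is_cond H K (w, t)" by (rule is_cond_glued[OF c G(2-4) t_K t_dom t_proj t_norm])
  moreover have "sigma_step Sig (w, s) (w, t)"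
    unfolding sigma_step_def prod.case using G(1,3) t by blast
  ultimately have "op_step H K Sig Sigb (w, s) (w, t)"
    unfolding op_step_def using c by blast
  then show thesis using that t_dom t_proj t_norm by blast
qed

lemma is_cond_interleave:
  assumes c: "is_cond H K (w, t)"
    and K: "\<And>k. s0 k \<in> K" "\<And>k. s1 k \<in> K"
    and dom: "\<And>k. sdom (s0 k) \<union> sdom (s1 k) = sdom (t k)" "\<And>k. sdom (s0 k) \<inter> sdom (s1 k) = {}"
    and finite: "\<And>k. snor (s0 k) \<noteq> \<infinity>" "\<And>k. snor (s1 k) \<noteq> \<infinity>"
    and norm: "\<And>k. snor (t k) - 1 \<le> snor (s0 k)" "\<And>k. snor (t k) - 1 \<le> snor (s1 k)"
  shows "is_cond H K (w, interleave s0 s1)"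
proof (rule is_condI)
  let ?u = "interleave s0 s1"
  have u_sub: "sdom (?u m) \<subseteq> sdom (t (m div 2))" for m
    using dom(1)[of "m div 2"] unfolding interleave_def by auto
  show "?u m \<in> K" "snor (?u m) \<noteq> \<infinity>" for m
    unfolding interleave_def using K finite by simp_all
  show "dom w \<inter> sdom (?u m) = {}" for m
    using u_sub[of m] is_condD(4)[OF c, of "m div 2"] by blast
  show "sdom (?u m) \<inter> sdom (?u m') = {}" if "m \<noteq> m'" for m m'
  proof (cases "m div 2 = m' div 2")
    case True
    have "even m \<noteq> even m'"
    proof
      assume "even m = even m'"
      then have "m mod 2 = m' mod 2" by (simp add: mod2_eq_if)
      then show False using True that by (metis div_mult_mod_eq)
    qed
    then show ?thesis
      using True dom(2)[of "m div 2"] unfolding interleave_def by (auto simp: Int_commute)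
  next
    case False
    then show ?thesis using u_sub[of m] u_sub[of m'] is_condD(5)[OF c False] by blast
  qed
  have "x \<in> (\<Union>m. sdom (?u m))" if x: "x \<notin> dom w" for x
  proof -
    obtain k where "x \<in> sdom (t k)" using is_cond_cover[OF c x] by blast
    then have "x \<in> sdom (?u (2 * k)) \<union> sdom (?u (Suc (2 * k)))" using dom(1) by simp
    then show ?thesis by blast
  qed
  then show "dom w \<union> (\<Union>m. sdom (?u m)) = UNIV" by blast
  show "finite {m. snor (?u m) \<le> ereal R}" for R
  proof (rule finite_subset)
    show "{m. snor (?u m) \<le> ereal R} \<subseteq> (\<lambda>m. m div 2) -` {k. snor (t k) \<le> ereal (R + 1)}"
    proof
      fix m assume "m \<in> {m. snor (?u m) \<le> ereal R}"
      moreover have "snor (t (m div 2)) - 1 \<le> snor (?u m)" unfolding interleave_def using norm by simp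
      ultimately have "snor (t (m div 2)) - 1 \<le> ereal R" by simp
      then show "m \<in> (\<lambda>m. m div 2) -` {k. snor (t k) \<le> ereal (R + 1)}" using ereal_le_add_one by simp
    qed
    show "finite ((\<lambda>m. m div 2) -` {k. snor (t k) \<le> ereal (R + 1)})"
      using finite_vimage_div2 is_condD(8)[OF c] .
  qed
qed (use is_condD(1,2)[OF c] in simp_all)

text \<open>
  The creatures c in the last two hypotheses certify that the two pieces of each cut have finite
  norm, as the creatures of a condition must.
\<close>

lemma cut_pieces:
  assumes cutting: "cutting_property K Sigb" and c: "is_cond H K (w, t)"
    and norm: "\<And>k. 1 < snor (t k)"
    and z: "\<And>k. z k \<noteq> {}" "\<And>k. z k \<subset> sdom (t k)"
    and inner: "\<And>k. \<exists>c\<in>K. projects_to (t k) c \<and> sdom c \<subseteq> z k \<and> snor c \<noteq> \<infinity>"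
    and outer: "\<And>k. \<exists>c\<in>K. projects_to (t k) c \<and> sdom c \<subseteq> sdom (t k) - z k \<and> snor c \<noteq> \<infinity>"
  obtains s0 s1 where "\<And>k. s0 k \<in> K" "\<And>k. s1 k \<in> K"
    "\<And>k. sdom (s0 k) = z k" "\<And>k. sdom (s1 k) = sdom (t k) - z k"
    "\<And>k. snor (s0 k) \<noteq> \<infinity>" "\<And>k. snor (s1 k) \<noteq> \<infinity>"
    "\<And>k. snor (t k) - 1 \<le> snor (s0 k)" "\<And>k. snor (t k) - 1 \<le> snor (s1 k)"
    "\<And>k. {s0 k, s1 k} \<in> Sigb (t k)"
proof -
  let ?P = "\<lambda>k s0 s1. s0 \<in> K \<and> s1 \<in> K \<and> sdom s0 = z k \<and> sdom s1 = sdom (t k) - z k \<and>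
      snor (t k) - 1 \<le> snor s0 \<and> snor (t k) - 1 \<le> snor s1 \<and> {s0, s1} \<in> Sigb (t k)"
  have "\<forall>k. \<exists>p. ?P k (fst p) (snd p)"
  proof
    fix k
    obtain s0 s1 where "?P k s0 s1"
      using cutting[unfolded cutting_property_def, rule_format, OF is_condD(3)[OF c] norm conjI[OF z(1,2)]]
      by blast
    then show "\<exists>p. ?P k (fst p) (snd p)" by (intro exI[of _ "(s0, s1)"]) simp
  qed
  from choice[OF this] obtain p where p_all: "\<forall>k. ?P k (fst (p k)) (snd (p k))" ..
  define s0 where "s0 k = fst (p k)" for k
  define s1 where "s1 k = snd (p k)" for k
  have p: "?P k (s0 k) (s1 k)" for k using p_all unfolding s0_def s1_def by blast
  then have piece_K: "s0 k \<in> K" "s1 k \<in> K"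
    and piece_dom: "sdom (s0 k) = z k" "sdom (s1 k) = sdom (t k) - z k"
    and piece_norm: "snor (t k) - 1 \<le> snor (s0 k)" "snor (t k) - 1 \<le> snor (s1 k)"
    and cut: "{s0 k, s1 k} \<in> Sigb (t k)" for k
    by simp_all
  have t_K: "t k \<in> K" for k using is_condD(3)[OF c] .
  have disj: "sdom (s0 k) \<inter> sdom (s1 k) = {}" for k unfolding piece_dom by blast
  have "snor (s0 k) \<noteq> \<infinity>" for k
  proof -
    obtain c where c: "c \<in> K" "projects_to (t k) c" "sdom c \<subseteq> sdom (s0 k)" "snor c \<noteq> \<infinity>"
      using inner[of k] unfolding piece_dom by blast
    show ?thesis by (rule Sigb_piece_finite_norm[OF t_K cut piece_K disj c])
  qed
  moreover have "snor (s1 k) \<noteq> \<infinity>" for k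
  proof -
    obtain c where c: "c \<in> K" "projects_to (t k) c" "sdom c \<subseteq> sdom (s1 k)" "snor c \<noteq> \<infinity>"
      using outer[of k] unfolding piece_dom by blast
    have "{s1 k, s0 k} \<in> Sigb (t k)" "sdom (s1 k) \<inter> sdom (s0 k) = {}"
      using cut disj by (auto simp: insert_commute)
    from Sigb_piece_finite_norm[OF t_K this(1) piece_K(2,1) this(2) c]
    show ?thesis .
  qed
  ultimately show thesis using that piece_K piece_dom piece_norm cut by blast
qed

lemma cut_step:
  assumes cutting: "cutting_property K Sigb" and c: "is_cond H K (w, t)"
    and norm: "\<And>k. 1 < snor (t k)"
    and z: "\<And>k. z k \<noteq> {}" "\<And>k. z k \<subset> sdom (t k)"
    and inner: "\<And>k. \<exists>c\<in>K. projects_to (t k) c \<and> sdom c \<subseteq> z k \<and> snor c \<noteq> \<infinity>"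
    and outer: "\<And>k. \<exists>c\<in>K. projects_to (t k) c \<and> sdom c \<subseteq> sdom (t k) - z k \<and> snor c \<noteq> \<infinity>"
  obtains u where "op_step H K Sig Sigb (w, t) (w, u)"
    "\<And>k. sdom (u (2 * k)) = z k" "\<And>k. sdom (u (Suc (2 * k))) = sdom (t k) - z k"
    "\<And>m. snor (t (m div 2)) - 1 \<le> snor (u m)"
proof -
  obtain s0 s1 where piece_K: "\<And>k. s0 k \<in> K" "\<And>k. s1 k \<in> K"
    and piece_dom: "\<And>k. sdom (s0 k) = z k" "\<And>k. sdom (s1 k) = sdom (t k) - z k"
    and piece_finite: "\<And>k. snor (s0 k) \<noteq> \<infinity>" "\<And>k. snor (s1 k) \<noteq> \<infinity>"
    and piece_norm: "\<And>k. snor (t k) - 1 \<le> snor (s0 k)" "\<And>k. snor (t k) - 1 \<le> snor (s1 k)"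
    and cut: "\<And>k. {s0 k, s1 k} \<in> Sigb (t k)"
    using cut_pieces[OF cutting c norm z inner outer] by blast
  have disj: "sdom (s0 k) \<inter> sdom (s1 k) = {}" for k unfolding piece_dom by blast
  have "is_cond H K (w, interleave s0 s1)"
  proof (rule is_cond_interleave[OF c piece_K _ disj piece_finite piece_norm])
    show "sdom (s0 k) \<union> sdom (s1 k) = sdom (t k)" for k unfolding piece_dom using z(2)[of k] by blast
  qed
  moreover have "sigmabot_step Sigb (w, t) (w, interleave s0 s1)"
    unfolding sigmabot_step_def prod.case
  proof (intro conjI exI[of _ "\<lambda>k. {2 * k, Suc (2 * k)}"] allI impI)
    show "interleave s0 s1 ` {2 * k, Suc (2 * k)} \<in> Sigb (t k)" for k
      using cut by (simp del: mult_Suc_right)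
    show "{2 * k, Suc (2 * k)} \<inter> {2 * k', Suc (2 * k')} = {}" if "k \<noteq> k'" for k k' :: nat
      using that by auto
  qed simp_all
  ultimately have "op_step H K Sig Sigb (w, t) (w, interleave s0 s1)"
    unfolding op_step_def using c by blast
  then show thesis
  proof (rule that)
    show "snor (t (m div 2)) - 1 \<le> snor (interleave s0 s1 m)" for m
      unfolding interleave_def using piece_norm by simp
  qed (simp_all add: piece_dom)
qed

lemma linked_common_refinement:
  assumes linked: "linked_triple K Sig"
    and u: "\<forall>j\<le>m. u j \<in> K \<and> sdom (u j) = D \<and> ereal lb \<le> snor (u j)" and lb: "real m + 1 < lb"
  shows "\<exists>s\<in>K. sdom s = D \<and> (\<forall>j\<le>m. s \<in> Sig {u j}) \<and>
    (\<forall>R. (\<forall>j\<le>m. ereal R \<le> snor (u j)) \<longrightarrow> ereal (R - real m) \<le> snor s)"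
  using u lb
proof (induction m)
  case 0
  then show ?case using Sig_singleton_self by (intro bexI[of _ "u 0"]) auto
next
  case (Suc m)
  then obtain s where s: "s \<in> K" "sdom s = D" "\<forall>j\<le>m. s \<in> Sig {u j}"
    and s_norm: "\<forall>R. (\<forall>j\<le>m. ereal R \<le> snor (u j)) \<longrightarrow> ereal (R - real m) \<le> snor s"
    by auto
  have u': "u (Suc m) \<in> K" "sdom (u (Suc m)) = D" "ereal lb \<le> snor (u (Suc m))"
    using Suc.prems by auto
  have "ereal 1 < ereal (lb - real m)" "ereal (lb - real m) \<le> snor s"
    using s_norm Suc.prems by auto
  then have s_gt: "1 < snor s" unfolding one_ereal_def by (meson order_less_le_trans)
  have "ereal 1 < ereal lb" using Suc.prems(2) by simp
  then have u_gt: "1 < snor (u (Suc m))" using u'(3) unfolding one_ereal_def by (meson order_less_le_trans)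
  obtain s' where s': "s' \<in> Sig {s}" "s' \<in> Sig {u (Suc m)}"
    and s'_norm: "min (snor s) (snor (u (Suc m))) - 1 \<le> snor s'"
    using linked s(1) u'(1) s_gt u_gt s(2) u'(2) unfolding linked_triple_def by force
  have s'_K: "s' \<in> K" using Sig_subset_K[of "{s}"] s(1) s'(1) by blast
  show ?case
  proof (intro bexI[OF _ s'_K] conjI allI impI)
    show "sdom s' = D" using Sig_dom_restrict(1)[of "{s}"] s(1,2) s'(1) by simp
    show "s' \<in> Sig {u j}" if "j \<le> Suc m" for j
    proof (cases "j = Suc m")
      case False
      then have "s \<in> Sig {u j}" "u j \<in> K" using that s(3) Suc.prems(1) by auto
      then show ?thesis using Sig_singleton_trans[OF s(1)] s'(1) by blast
    qed (use s'(2) in simp)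
    fix R assume R: "\<forall>j\<le>Suc m. ereal R \<le> snor (u j)"
    have "ereal (R - real m) \<le> snor s" using s_norm R by auto
    moreover have "ereal (R - real m) \<le> snor (u (Suc m))"
      using R order_trans[of "ereal (R - real m)" "ereal R"] by auto
    ultimately have "ereal (R - real m - 1) \<le> min (snor s) (snor (u (Suc m))) - 1"
      by (intro ereal_diff_one_mono) simp
    then show "ereal (R - real (Suc m)) \<le> snor s'" using s'_norm by (simp add: algebra_simps)
  qed
qed

lemma linked_amalgamation:
  assumes linked: "linked_triple K Sig"
    and c: "\<And>j. j \<le> n \<Longrightarrow> is_cond H K (w, U j)"
    and dom: "\<And>j k. j \<le> n \<Longrightarrow> sdom (U j k) = D k"
    and norm: "\<And>j k. j \<le> n \<Longrightarrow> ereal lb \<le> snor (U j k)" and lb: "real n + 1 < lb"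
  obtains r where "is_cond H K (w, r)" "\<And>j. j \<le> n \<Longrightarrow> op_step H K Sig Sigb (w, U j) (w, r)"
proof -
  have "\<forall>k. \<exists>r. r \<in> K \<and> sdom r = D k \<and> (\<forall>j\<le>n. r \<in> Sig {U j k}) \<and>
      (\<forall>R. (\<forall>j\<le>n. ereal R \<le> snor (U j k)) \<longrightarrow> ereal (R - real n) \<le> snor r)"
  proof
    fix k
    have "\<forall>j\<le>n. U j k \<in> K \<and> sdom (U j k) = D k \<and> ereal lb \<le> snor (U j k)"
      using is_condD(3)[OF c] dom norm by blast
    from linked_common_refinement[OF linked this lb]
    show "\<exists>r. r \<in> K \<and> sdom r = D k \<and> (\<forall>j\<le>n. r \<in> Sig {U j k}) \<and>
      (\<forall>R. (\<forall>j\<le>n. ereal R \<le> snor (U j k)) \<longrightarrow> ereal (R - real n) \<le> snor r)"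
      by blast
  qed
  from choice[OF this] obtain r where r_all: "\<forall>k. r k \<in> K \<and> sdom (r k) = D k \<and>
      (\<forall>j\<le>n. r k \<in> Sig {U j k}) \<and>
      (\<forall>R. (\<forall>j\<le>n. ereal R \<le> snor (U j k)) \<longrightarrow> ereal (R - real n) \<le> snor (r k))" ..
  then have r_K: "r k \<in> K" and r_dom: "sdom (r k) = sdom (U 0 k)"
    and r_Sig: "\<And>j. j \<le> n \<Longrightarrow> r k \<in> Sig {U j k}"
    and r_norm: "\<And>R. (\<forall>j\<le>n. ereal R \<le> snor (U j k)) \<Longrightarrow> ereal (R - real n) \<le> snor (r k)" for k
    using dom[of 0] by auto
  have c0: "is_cond H K (w, U 0)" using c by simp
  have "is_cond H K (w, r)"
  proof (rule is_condI)
    show "snor (r k) \<noteq> \<infinity>" for k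
    proof (rule projects_to_finite_norm[OF r_K])
      show "projects_to (r k) (U 0 k)" using Sig_projects_to[of "{U 0 k}"] is_condD(3)[OF c0] r_Sig[of 0] by simp
    qed (use is_condD(3,7)[OF c0] in auto)
    show "finite {k. snor (r k) \<le> ereal R}" for R
    proof (rule finite_subset)
      show "{k. snor (r k) \<le> ereal R} \<subseteq> (\<Union>j\<le>n. {k. snor (U j k) \<le> ereal (R + real n + 1)})"
      proof (rule subsetI, rule ccontr)
        fix k assume k: "k \<in> {k. snor (r k) \<le> ereal R}" "k \<notin> (\<Union>j\<le>n. {k. snor (U j k) \<le> ereal (R + real n + 1)})"
        then have "\<forall>j\<le>n. ereal (R + real n + 1) \<le> snor (U j k)" by (auto simp: not_le intro: less_imp_le)
        then have "ereal (R + 1) \<le> snor (r k)" using r_norm[of "R + real n + 1" k] by simp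
        then have "ereal (R + 1) \<le> ereal R" using k(1) by (blast intro: order_trans)
        then show False by simp
      qed
      show "finite (\<Union>j\<le>n. {k. snor (U j k) \<le> ereal (R + real n + 1)})"
        using is_condD(8)[OF c] by (intro finite_UN_I) auto
    qed
  qed (use is_condD[OF c0] r_K in \<open>simp_all add: r_dom\<close>)
  moreover have "sigma_step Sig (w, U j) (w, r)" if "j \<le> n" for j
    unfolding sigma_step_def prod.case using r_Sig[OF that] by (intro conjI exI[of _ "\<lambda>k. {k}"]) auto
  ultimately show thesis using that c unfolding op_step_def by blast
qed

end

section \<open>Normalising conditions to common blocks\<close>

text \<open>
  The creatures starting in [b k, b (k + 1)) form the k-th group. They all end before
  a (k + 1), and the cut point a k separates two whole creatures of the group, one on each side.
\<close>

definition block_bounds :: "(nat \<Rightarrow> nat) \<Rightarrow> (nat \<Rightarrow> nat) \<Rightarrow> (nat \<Rightarrow> ('a, 'd) screature) \<Rightarrow> bool" where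
  "block_bounds a b s \<longleftrightarrow> b 0 = 0 \<and> (\<forall>k. b k < a k \<and> a k < b (Suc k)) \<and>
     (\<forall>k i. Min (sdom (s i)) < b (Suc k) \<longrightarrow> Max (sdom (s i)) < a (Suc k)) \<and>
     (\<forall>k. \<exists>i. b k \<le> Min (sdom (s i)) \<and> Max (sdom (s i)) < a k) \<and>
     (\<forall>k. \<exists>i. a k \<le> Min (sdom (s i)) \<and> Max (sdom (s i)) < b (Suc k))"

context semi_creating_setting
begin

lemma ex_common_block_bounds:
  assumes "finite J" and c: "\<And>j. j \<in> J \<Longrightarrow> is_cond H K (w j, S j)"
  shows "\<exists>a b. \<forall>j\<in>J. block_bounds a b (S j)"
proof -
  define F where "F x = {x} \<union> (\<Union>j\<in>J. (\<lambda>i. Max (sdom (S j i))) ` {i. Min (sdom (S j i)) < x})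
     \<union> (\<lambda>j. Max (sdom (S j (SOME i. x \<le> Min (sdom (S j i)))))) ` J" for x
  txt \<open>next_bound x exceeds x, the ends of all creatures starting below x, and for each j
    the end of a creature of S j starting at or after x.\<close>
  define next_bound where "next_bound x = Suc (Max (F x))" for x
  have "finite (F x)" for x
    unfolding F_def using assms(1) is_cond_finite_Min_less[OF c] by auto
  then have above: "y \<in> F x \<Longrightarrow> y < next_bound x" for x y
    unfolding next_bound_def by (simp add: le_imp_less_Suc)
  have bound_gt: "x < next_bound x" for x
    using above unfolding F_def by blast
  have bound_ends: "Max (sdom (S j i)) < next_bound x" if "j \<in> J" "Min (sdom (S j i)) < x" for j i x
    using above that unfolding F_def by blast
  have bound_creature: "\<exists>i. x \<le> Min (sdom (S j i)) \<and> Max (sdom (S j i)) < next_bound x"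
    if "j \<in> J" for j x
  proof (intro exI conjI)
    show "x \<le> Min (sdom (S j (SOME i. x \<le> Min (sdom (S j i)))))"
      using is_cond_ex_Min_ge[OF c[OF that]] by (rule someI_ex)
    show "Max (sdom (S j (SOME i. x \<le> Min (sdom (S j i))))) < next_bound x"
      using above that unfolding F_def by blast
  qed
  define b where "b = rec_nat 0 (\<lambda>_ y. next_bound (next_bound y))"
  define a where "a k = next_bound (b k)" for k
  have b_Suc: "b (Suc k) = next_bound (a k)" for k
    unfolding a_def b_def by simp
  have "block_bounds a b (S j)" if "j \<in> J" for j
    unfolding block_bounds_def b_Suc
    using bound_gt bound_ends[OF that] bound_creature[OF that]
    by (auto simp: a_def b_def)
  then show ?thesis by blast
qed

end

definition block_dom :: "(nat \<rightharpoonup> 'a) \<Rightarrow> (nat \<Rightarrow> nat) \<Rightarrow> nat \<Rightarrow> nat set" where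
  "block_dom w a k = {x. x \<notin> dom w \<and> (case k of 0 \<Rightarrow> 0 | Suc k' \<Rightarrow> a k') \<le> x \<and> x < a k}"

text \<open>
  After cutting group k at a k into the pieces 2k (below) and 2k + 1 (above), block k + 1
  consists of the pieces 2k + 1 and 2k + 2.
\<close>

definition pair_group :: "nat \<Rightarrow> nat set" where
  "pair_group k = (case k of 0 \<Rightarrow> {0} | Suc k' \<Rightarrow> {Suc (2 * k'), Suc (Suc (2 * k'))})"

lemma pair_group_finite: "finite (pair_group k)"
  unfolding pair_group_def by (cases k) auto

lemma pair_group_nonempty: "pair_group k \<noteq> {}"
  unfolding pair_group_def by (cases k) auto

lemma pair_group_disjoint: "k \<noteq> k' \<Longrightarrow> pair_group k \<inter> pair_group k' = {}"
  unfolding pair_group_def by (cases k; cases k') auto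

lemma pair_group_cover: "\<exists>k. m \<in> pair_group k"
proof (cases m)
  case (Suc m')
  then have "m \<in> pair_group (Suc (m' div 2))" unfolding pair_group_def by auto
  then show ?thesis ..
qed (auto simp: pair_group_def intro: exI[of _ 0])

locale blocked_condition = semi_creating_setting H K Sig Sigb
  for H :: "nat \<Rightarrow> 'a set" and K :: "('a, 'd) screature set" and Sig Sigb +
  fixes w :: "nat \<rightharpoonup> 'a" and s :: "nat \<Rightarrow> ('a, 'd) screature" and a b :: "nat \<Rightarrow> nat"
  assumes cond: "is_cond H K (w, s)" and bounds: "block_bounds a b s"
begin

abbreviation lo :: "nat \<Rightarrow> nat" where "lo i \<equiv> Min (sdom (s i))"

abbreviation hi :: "nat \<Rightarrow> nat" where "hi i \<equiv> Max (sdom (s i))"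

definition group :: "nat \<Rightarrow> nat set" where
  "group k = {i. b k \<le> lo i \<and> lo i < b (Suc k)}"

definition group_dom :: "nat \<Rightarrow> nat set" where
  "group_dom k = (\<Union>i\<in>group k. sdom (s i))"

lemma b_0: "b 0 = 0" and b_less_a: "b k < a k" and a_less_b: "a k < b (Suc k)"
  and group_ends: "lo i < b (Suc k) \<Longrightarrow> hi i < a (Suc k)"
  and lower_creature: "\<exists>i. b k \<le> lo i \<and> hi i < a k"
  and upper_creature: "\<exists>i. a k \<le> lo i \<and> hi i < b (Suc k)"
  using bounds unfolding block_bounds_def by blast+

lemma strict_mono_a: "strict_mono a"
  unfolding strict_mono_Suc_iff using b_less_a a_less_b less_trans by blast

lemma strict_mono_b: "strict_mono b"
  unfolding strict_mono_Suc_iff using b_less_a a_less_b less_trans by blast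

lemma lo_le_hi: "y \<in> sdom (s i) \<Longrightarrow> lo i \<le> y \<and> y \<le> hi i"
  using is_cond_Min_le_Max[OF cond] by blast

lemma finite_group: "finite (group k)"
  by (rule finite_subset[OF _ is_cond_finite_Min_less[OF cond, of "b (Suc k)"]]) (auto simp: group_def)

lemma group_disjoint:
  assumes "k \<noteq> k'"
  shows "group k \<inter> group k' = {}"
proof -
  have "i \<notin> group k'" if "i \<in> group k" "k < k'" for i k k'
  proof -
    have "b (Suc k) \<le> b k'" using that(2) strict_mono_less_eq[OF strict_mono_b] by simp
    then show ?thesis using that(1) unfolding group_def by simp
  qed
  then show ?thesis using assms by (cases "k < k'") (auto simp: not_less_iff_gr_or_eq)
qed

lemma group_cover: "\<exists>k. i \<in> group k"
  using strict_mono_bracket[OF strict_mono_b, of "lo i"] b_0 unfolding group_def by simp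

lemma lower_part_witness: "\<exists>i\<in>group k. sdom (s i) \<subseteq> group_dom k \<inter> {..<a k}"
proof -
  obtain i where i: "b k \<le> lo i" "hi i < a k" using lower_creature by blast
  have "lo i \<le> hi i" using lo_le_hi is_cond_Min_in[OF cond] by blast
  then have "i \<in> group k" using i b_less_a[of k] a_less_b[of k] unfolding group_def by simp
  moreover have "sdom (s i) \<subseteq> {..<a k}" using lo_le_hi i(2) by fastforce
  ultimately show ?thesis unfolding group_dom_def by blast
qed

lemma upper_part_witness: "\<exists>i\<in>group k. sdom (s i) \<subseteq> group_dom k - {..<a k}"
proof -
  obtain i where i: "a k \<le> lo i" "hi i < b (Suc k)" using upper_creature by blast
  have "lo i \<le> hi i" using lo_le_hi is_cond_Min_in[OF cond] by blast
  then have "i \<in> group k" using i b_less_a[of k] unfolding group_def by simp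
  moreover have "sdom (s i) \<inter> {..<a k} = {}" using lo_le_hi i(1) by fastforce
  ultimately show ?thesis unfolding group_dom_def by blast
qed

lemma group_nonempty: "group k \<noteq> {}"
  using lower_part_witness by blast

lemma group_dom_bounds:
  assumes "x \<in> group_dom k"
  shows "x < a (Suc k)" "k = Suc k' \<Longrightarrow> a k' < x"
proof -
  obtain i where i: "i \<in> group k" "x \<in> sdom (s i)" using assms unfolding group_dom_def by blast
  show "x < a (Suc k)" using group_ends i lo_le_hi unfolding group_def by fastforce
  show "a k' < x" if "k = Suc k'"
    using i lo_le_hi a_less_b[of k'] that unfolding group_def by fastforce
qed

lemma group_dom_disjoint_dom: "dom w \<inter> group_dom k = {}"
  unfolding group_dom_def using is_condD(4)[OF cond] by blast

lemma group_dom_cover: "x \<notin> dom w \<Longrightarrow> \<exists>k. x \<in> group_dom k"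
  using is_cond_cover[OF cond] group_cover unfolding group_dom_def by blast

lemma block_dom_0: "block_dom w a 0 = group_dom 0 \<inter> {..<a 0}"
proof (intro set_eqI iffI)
  fix x assume x: "x \<in> block_dom w a 0"
  then have "x \<notin> dom w" unfolding block_dom_def by simp
  then obtain k where k: "x \<in> group_dom k" using group_dom_cover by blast
  have "k = 0"
  proof (rule ccontr)
    assume "k \<noteq> 0"
    then obtain k' where "k = Suc k'" using not0_implies_Suc by blast
    then have "a k' < a 0" using group_dom_bounds(2)[OF k] x unfolding block_dom_def by auto
    then show False using strict_mono_less[OF strict_mono_a] by simp
  qed
  then show "x \<in> group_dom 0 \<inter> {..<a 0}" using k x unfolding block_dom_def by simp
qed (use group_dom_disjoint_dom in \<open>auto simp: block_dom_def\<close>)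

lemma block_dom_Suc:
  "block_dom w a (Suc k) = (group_dom k - {..<a k}) \<union> (group_dom (Suc k) \<inter> {..<a (Suc k)})"
proof (intro set_eqI iffI)
  fix x assume x: "x \<in> block_dom w a (Suc k)"
  then have "x \<notin> dom w" unfolding block_dom_def by simp
  then obtain j where j: "x \<in> group_dom j" using group_dom_cover by blast
  have "a k < a (Suc j)" using group_dom_bounds(1)[OF j] x unfolding block_dom_def by simp
  then have "k \<le> j" using strict_mono_less[OF strict_mono_a] by simp
  moreover have "j \<le> Suc k"
  proof (rule ccontr)
    assume "\<not> j \<le> Suc k"
    then obtain j' where "j = Suc j'" "Suc k \<le> j'" by (cases j) auto
    then have "a (Suc k) \<le> a j'" "a j' < x"
      using group_dom_bounds(2)[OF j] strict_mono_less_eq[OF strict_mono_a] by auto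
    then show False using x unfolding block_dom_def by simp
  qed
  ultimately have "j = k \<or> j = Suc k" by auto
  then show "x \<in> (group_dom k - {..<a k}) \<union> (group_dom (Suc k) \<inter> {..<a (Suc k)})"
    using j x unfolding block_dom_def by auto
next
  fix x assume "x \<in> (group_dom k - {..<a k}) \<union> (group_dom (Suc k) \<inter> {..<a (Suc k)})"
  then show "x \<in> block_dom w a (Suc k)"
    using group_dom_bounds[of x] group_dom_disjoint_dom unfolding block_dom_def by fastforce
qed

lemma glue_and_cut_groups:
  assumes gluing: "semi_gluing K Sig" and cutting: "cutting_property K Sigb"
    and norm: "\<And>i. ereal N < snor (s i)" and N: "2 < N"
  obtains u where "Q_le H K Sig Sigb (w, s) (w, u)"
    "\<And>k. sdom (u (2 * k)) = group_dom k \<inter> {..<a k}"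
    "\<And>k. sdom (u (Suc (2 * k))) = group_dom k - {..<a k}"
    "\<And>m. ereal (N - 2) \<le> snor (u m)"
proof -
  obtain t where t_step: "op_step H K Sig Sigb (w, s) (w, t)"
    and t_dom: "\<And>k. sdom (t k) = (\<Union>i\<in>group k. sdom (s i))"
    and t_proj: "\<And>k i. i \<in> group k \<Longrightarrow> projects_to (t k) (s i)"
    and t_norm: "\<And>k R. (\<forall>i\<in>group k. ereal R \<le> snor (s i)) \<Longrightarrow> ereal (R - 1) \<le> snor (t k)"
    using glue_step[OF gluing cond finite_group group_nonempty group_disjoint group_cover] by blast
  have t_cond: "is_cond H K (w, t)" using t_step unfolding op_step_def by blast
  have t_dom': "sdom (t k) = group_dom k" for k unfolding t_dom group_dom_def ..
  have t_norm': "ereal (N - 1) \<le> snor (t k)" for k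
    using t_norm norm less_imp_le by blast
  have t_gt: "1 < snor (t k)" for k
  proof -
    have "ereal 1 < ereal (N - 1)" using N by simp
    then show ?thesis using t_norm' unfolding one_ereal_def by (meson order_less_le_trans)
  qed
  have witness: "\<exists>c\<in>K. projects_to (t k) c \<and> sdom c \<subseteq> Z \<and> snor c \<noteq> \<infinity>"
    if ex: "\<exists>i\<in>group k. sdom (s i) \<subseteq> Z" for k Z
  proof -
    obtain i where "i \<in> group k" "sdom (s i) \<subseteq> Z" using ex ..
    then show ?thesis using t_proj is_condD(3,7)[OF cond] by blast
  qed
  have upper: "sdom (t k) - group_dom k \<inter> {..<a k} = group_dom k - {..<a k}" for k
    unfolding t_dom' by blast
  have inner: "\<exists>c\<in>K. projects_to (t k) c \<and> sdom c \<subseteq> group_dom k \<inter> {..<a k} \<and> snor c \<noteq> \<infinity>" for k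
    using witness[OF lower_part_witness] .
  have outer: "\<exists>c\<in>K. projects_to (t k) c \<and> sdom c \<subseteq> sdom (t k) - group_dom k \<inter> {..<a k} \<and> snor c \<noteq> \<infinity>" for k
    unfolding upper using witness[OF upper_part_witness] .
  have nonempty: "group_dom k \<inter> {..<a k} \<noteq> {}" for k
  proof -
    obtain i where "sdom (s i) \<subseteq> group_dom k \<inter> {..<a k}" using lower_part_witness by blast
    then show ?thesis using K_dom_nonempty[OF is_condD(3)[OF cond]] by blast
  qed
  have proper: "group_dom k \<inter> {..<a k} \<subset> sdom (t k)" for k
  proof -
    obtain i where "sdom (s i) \<subseteq> group_dom k - {..<a k}" using upper_part_witness by blast
    then have "group_dom k - {..<a k} \<noteq> {}" using K_dom_nonempty[OF is_condD(3)[OF cond]] by blast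
    then show ?thesis unfolding t_dom' by blast
  qed
  obtain u where u_step: "op_step H K Sig Sigb (w, t) (w, u)"
    and u_lower: "\<And>k. sdom (u (2 * k)) = group_dom k \<inter> {..<a k}"
    and u_upper: "\<And>k. sdom (u (Suc (2 * k))) = sdom (t k) - group_dom k \<inter> {..<a k}"
    and u_norm: "\<And>m. snor (t (m div 2)) - 1 \<le> snor (u m)"
    using cut_step[OF cutting t_cond t_gt nonempty proper inner outer] by blast
  show thesis
  proof (rule that)
    show "Q_le H K Sig Sigb (w, s) (w, u)"
      using Q_le_trans[OF op_step_Q_le[OF t_step] op_step_Q_le[OF u_step]] .
    show "sdom (u (Suc (2 * k))) = group_dom k - {..<a k}" for k
      using u_upper upper by simp
    show "ereal (N - 2) \<le> snor (u m)" for m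
      using ereal_diff_one_mono[OF t_norm', of "m div 2"] u_norm[of m] by (simp add: order_trans)
  qed (rule u_lower)
qed

lemma normalize_to_blocks:
  assumes gluing: "semi_gluing K Sig" and cutting: "cutting_property K Sigb"
    and norm: "\<And>i. ereal N < snor (s i)" and N: "2 < N"
  obtains v where "Q_le H K Sig Sigb (w, s) (w, v)"
    "\<And>k. sdom (v k) = block_dom w a k" "\<And>k. ereal (N - 3) \<le> snor (v k)"
proof -
  obtain u where u_le: "Q_le H K Sig Sigb (w, s) (w, u)"
    and u_lower: "\<And>k. sdom (u (2 * k)) = group_dom k \<inter> {..<a k}"
    and u_upper: "\<And>k. sdom (u (Suc (2 * k))) = group_dom k - {..<a k}"
    and u_norm: "\<And>m. ereal (N - 2) \<le> snor (u m)"
    using glue_and_cut_groups[OF gluing cutting norm N] by blast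
  obtain v where v_step: "op_step H K Sig Sigb (w, u) (w, v)"
    and v_dom: "\<And>k. sdom (v k) = (\<Union>m\<in>pair_group k. sdom (u m))"
    and "\<And>k m. m \<in> pair_group k \<Longrightarrow> projects_to (v k) (u m)"
    and v_norm: "\<And>k R. (\<forall>m\<in>pair_group k. ereal R \<le> snor (u m)) \<Longrightarrow> ereal (R - 1) \<le> snor (v k)"
    using glue_step[OF gluing Q_le_is_cond[OF u_le] pair_group_finite pair_group_nonempty
        pair_group_disjoint pair_group_cover] by blast
  show thesis
  proof (rule that)
    show "Q_le H K Sig Sigb (w, s) (w, v)"
      using Q_le_trans[OF u_le op_step_Q_le[OF v_step]] .
    show "sdom (v k) = block_dom w a k" for k
    proof (cases k)
      case 0
      then show ?thesis using u_lower[of 0] by (simp add: v_dom pair_group_def block_dom_0)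
    next
      case (Suc k')
      have "Suc (Suc (2 * k')) = 2 * Suc k'" by simp
      then show ?thesis using Suc u_lower[of "Suc k'"] u_upper[of k']
        by (simp add: v_dom pair_group_def block_dom_Suc Un_commute del: mult_Suc_right)
    qed
    show "ereal (N - 3) \<le> snor (v k)" for k
      using v_norm[of k "N - 2"] u_norm by simp
  qed
qed

end

section \<open>The colouring\<close>

context semi_creating_setting
begin

lemma common_extension_large_norms:
  assumes linked: "linked_triple K Sig" and gluing: "semi_gluing K Sig"
    and cutting: "cutting_property K Sigb"
    and c: "\<And>j. j \<le> n \<Longrightarrow> is_cond H K (w, S j)"
    and norm: "\<And>j i. j \<le> n \<Longrightarrow> ereal N < snor (S j i)" and N: "real n + 4 < N"
  shows "\<exists>r\<in>Q_conds H K. \<forall>j\<le>n. Q_le H K Sig Sigb (w, S j) r"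
proof -
  obtain a b where ab: "\<And>j. j \<le> n \<Longrightarrow> block_bounds a b (S j)"
    using ex_common_block_bounds[of "{..n}" "\<lambda>_. w" S] c by auto
  have "\<exists>U. Q_le H K Sig Sigb (w, S j) (w, U) \<and> (\<forall>k. sdom (U k) = block_dom w a k) \<and>
      (\<forall>k. ereal (N - 3) \<le> snor (U k))" if j: "j \<le> n" for j
  proof -
    have "blocked_condition H K Sig Sigb w (S j) a b"
      by (intro blocked_condition.intro blocked_condition_axioms.intro semi_creating_setting_axioms c ab j)
    moreover have "2 < N" using N by linarith
    ultimately obtain U where "Q_le H K Sig Sigb (w, S j) (w, U)" "\<And>k. sdom (U k) = block_dom w a k"
      "\<And>k. ereal (N - 3) \<le> snor (U k)"
      using blocked_condition.normalize_to_blocks[of H K Sig Sigb w "S j" a b, OF _ gluing cutting norm[OF j]]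
      by blast
    then show ?thesis by blast
  qed
  then obtain U where U: "\<And>j. j \<le> n \<Longrightarrow> Q_le H K Sig Sigb (w, S j) (w, U j)"
    "\<And>j k. j \<le> n \<Longrightarrow> sdom (U j k) = block_dom w a k"
    "\<And>j k. j \<le> n \<Longrightarrow> ereal (N - 3) \<le> snor (U j k)"
    by metis
  obtain r where r: "is_cond H K (w, r)" "\<And>j. j \<le> n \<Longrightarrow> op_step H K Sig Sigb (w, U j) (w, r)"
  proof (rule linked_amalgamation[where n = n and U = U and D = "block_dom w a" and lb = "N - 3"])
    show "real n + 1 < N - 3" using N by simp
  qed (use linked Q_le_is_cond[OF U(1)] U(2,3) in auto)
  show ?thesis
    using r U(1) Q_le_trans op_step_Q_le unfolding Q_conds_def by blast
qed

lemma same_stem_common_extension: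
  assumes linked: "linked_triple K Sig" and gluing: "semi_gluing K Sig"
    and cutting: "cutting_property K Sigb"
    and q: "\<And>j. j \<le> n \<Longrightarrow> is_cond H K (q j)"
    and stem: "\<And>j. j \<le> n \<Longrightarrow> fst (decide_small_norms N (q j)) = fst (decide_small_norms N (q 0))"
    and N: "real n + 4 < N"
  shows "\<exists>r\<in>Q_conds H K. \<forall>j\<le>n. Q_le H K Sig Sigb (q j) r"
proof -
  define w where "w = fst (decide_small_norms N (q 0))"
  define S where "S j = snd (decide_small_norms N (q j))" for j
  have step: "op_step H K Sig Sigb (q j) (w, S j)" if "j \<le> n" for j
  proof -
    have "decide_small_norms N (q j) = (w, S j)"
      using stem[OF that] unfolding w_def S_def by (metis prod.collapse)
    then show ?thesis using op_step_decide_small_norms[OF q[OF that], of N] by simp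
  qed
  then have "is_cond H K (w, S j)" if "j \<le> n" for j
    using that unfolding op_step_def by blast
  moreover have "ereal N < snor (S j i)" if "j \<le> n" for j i
    using snor_decide_small_norms[OF q[OF that]] unfolding S_def .
  ultimately obtain r where "r \<in> Q_conds H K" "\<forall>j\<le>n. Q_le H K Sig Sigb (w, S j) r"
    using common_extension_large_norms[OF linked gluing cutting _ _ N] by blast
  then show ?thesis using Q_le_trans[OF op_step_Q_le[OF step]] by blast
qed

end

theorem theorem2p4:
  fixes H :: "nat \<Rightarrow> 'a set"
    and K :: "('a, 'd) screature set"
    and Sig :: "('a, 'd) screature set \<Rightarrow> ('a, 'd) screature set"
    and Sigb :: "('a, 'd) screature \<Rightarrow> ('a, 'd) screature set set"
  assumes "\<exists>code :: 'd \<Rightarrow> nat set. inj code"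
    and "\<forall>i. countable (H i) \<and> (\<exists>x\<in>H i. \<exists>y\<in>H i. x \<noteq> y)"
    and "semi_creating_triple H K Sig Sigb"
    and "linked_triple K Sig"
    and "semi_gluing K Sig"
    and "cutting_property K Sigb"
  shows "sigma_star_linked (Q_conds H K) (Q_le H K Sig Sigb)"
proof -
  interpret semi_creating_setting H K Sig Sigb
    using assms(2,3) by unfold_locales blast+
  show ?thesis unfolding sigma_star_linked_def
  proof
    fix n :: nat
    txt \<open>N - 3 is the norm left after normalising, and linking n + 1 conditions needs more
      than n + 1.\<close>
    define N where "N = real n + 5"
    define W where "W = {w :: nat \<rightharpoonup> 'a. finite (dom w) \<and> (\<forall>i\<in>dom w. the (w i) \<in> H i)}"
    have W: "countable W" unfolding W_def by (rule countable_finite_maps) (use assms(2) in blast)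
    define colour where "colour p = to_nat_on W (fst (decide_small_norms N p))" for p :: "('a, 'd) qcond"
    have "\<exists>r\<in>Q_conds H K. \<forall>j\<le>n. Q_le H K Sig Sigb (q j) r"
      if q: "\<forall>j\<le>n. q j \<in> Q_conds H K \<and> colour (q j) = colour (q 0)" for q
    proof (rule same_stem_common_extension[OF assms(4-6)])
      show cond: "is_cond H K (q j)" if "j \<le> n" for j
        using q that unfolding Q_conds_def by blast
      have stem_W: "fst (decide_small_norms N (q j)) \<in> W" if "j \<le> n" for j
        using stem_decide_small_norms[OF cond[OF that]] unfolding W_def .
      show "fst (decide_small_norms N (q j)) = fst (decide_small_norms N (q 0))" if "j \<le> n" for j
      proof -
        have "colour (q j) = colour (q 0)" using q that by blast
        then show ?thesis
          using inj_on_eq_iff[OF inj_on_to_nat_on[OF W] stem_W[OF that] stem_W[of 0]]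
          unfolding colour_def by simp
      qed
      show "real n + 4 < N" unfolding N_def by simp
    qed
    then show "\<exists>c :: ('a, 'd) qcond \<Rightarrow> nat. \<forall>q. (\<forall>j\<le>n. q j \<in> Q_conds H K \<and> c (q j) = c (q 0)) \<longrightarrow>
        (\<exists>r\<in>Q_conds H K. \<forall>j\<le>n. Q_le H K Sig Sigb (q j) r)"
      by (intro exI[of _ colour] allI impI)
  qed
qed

end
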